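(* Consider the repeated service game described in the context, with $t>0$, $c>0$, and a strictly decreasing continuous utility $\Gamma:[0,1]\to(0,\infty)$. Let $d^{\max}\in(0,1)$ and $w^{\min}\in(0,1)$ with $w^{\min}\Gamma(0)>c$. Let $d^\star$ be the unique $x\in(0,1)$ with $(1-x)\Gamma(x)=c/w^{\min}$. Define $$p^\star=\frac{c\left(\frac{c}{w^{\min}}-\Gamma(d^{\max})(1-d^{\max})\right)}{\left(\Gamma(d^\star)-\Gamma(d^{\max})\right)(1-d^\star)(1-d^{\max})-c\,(d^\star-d^{\max})},$$ $$\tau^\star=\frac{\Gamma(d^{\max})-p^\star}{\Gamma(d^{\max})-c/(1-d^{\max})}\,t,$$ assuming the denominators are nonzero and $0<\tau^\star<t$. Let $$w^\star=\frac{c}{(1-d^{\max})\Gamma(d^{\max})}.$$ Then: (i) with $(\tau,p)=(\tau^\star,p^\star)$, the cooperation conditions hold for every $d\in(0,d^{\max}]$ and every $w\in[w^\star,1)$; (ii) with $(\tau,p)=(\tau^\star,p^\star)$, the cooperation conditions hold for every $w\in[w^{\min},1)$ and every $d\in(0,d^\star]$; (iii) these thresholds are optimal. For every $\tau\in(0,t)$, every $p>0$ and every $w\in(0,1)$ with $w<w^\star$, the cooperation conditions fail at $d=d^{\max}$. Likewise, for every $\tau\in(0,t)$, every $p>0$ and every $d\in(d^\star,1)$, the cooperation conditions fail at $w=w^{\min}$.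
   Context: A service provider (SP) and a client interact in rounds of duration $t>0$. The parameters are: trial time $\tau\in(0,t)$, SP cost per unit time $c>0$, price per unit time $p>0$, channel outage probability $d\in(0,1)$, continuation probability (cooperation willingness) $w\in(0,1)$, and a client utility function $\Gamma$. When both players use COOP, the long-term payoffs are $$\Pi_s^{\mathrm C}=\frac{(1-d)(p-c)t-dc\tau}{1-(1-d)w},\qquad \Pi_c^{\mathrm C}=\frac{(1-d)(\Gamma(d)-p)t+d\Gamma(d)\tau}{1-(1-d)w}.$$ For an integer $j\ge 2$, the long-term payoff of a player using the defect-and-recover-after-$j$-rounds strategy JDEF$_j$ against COOP is: - for the SP, $$\Pi_s^{(j)}=\frac{(1-d)\big(pt-c\tau-w^{j-1}c(t-\tau)\big)-dc\tau}{1-(1-d)w^{j}};$$ - for the client, $$\Pi_c^{(j)}=\frac{(1-d)\big(\Gamma(d)\tau+w^{j-1}(\Gamma(d)(t-\tau)-pt)\big)+d\Gamma(d)\tau}{1-(1-d)w^{j}}.$$ The cooperation conditions (at given $d,w,\tau,p$) hold when both of the following hold: - $\Pi_s^{\mathrm C}\ge\Pi_s^{(j)}$ for all integers $j\ge2$; - $\Pi_c^{\mathrm C}\ge \Pi_c^{(j)}$ for all integers $j\ge 2$. *)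

theory Defs
  imports Complex_Main
begin

definition Pi_s_C :: "real \<Rightarrow> real \<Rightarrow> real \<Rightarrow> real \<Rightarrow> real \<Rightarrow> real \<Rightarrow> real" where
  "Pi_s_C t c tau p d w = ((1-d)*(p-c)*t - d*c*tau) / (1 - (1-d)*w)"

definition Pi_c_C :: "(real \<Rightarrow> real) \<Rightarrow> real \<Rightarrow> real \<Rightarrow> real \<Rightarrow> real \<Rightarrow> real \<Rightarrow> real" where
  "Pi_c_C \<Gamma> t tau p d w = ((1-d)*(\<Gamma> d - p)*t + d*\<Gamma> d*tau) / (1 - (1-d)*w)"

definition Pi_s_J :: "real \<Rightarrow> real \<Rightarrow> real \<Rightarrow> real \<Rightarrow> real \<Rightarrow> real \<Rightarrow> nat \<Rightarrow> real" where
  "Pi_s_J t c tau p d w j =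
     ((1-d)*(p*t - c*tau - w^(j-1)*c*(t-tau)) - d*c*tau) / (1 - (1-d)*w^j)"

definition Pi_c_J :: "(real \<Rightarrow> real) \<Rightarrow> real \<Rightarrow> real \<Rightarrow> real \<Rightarrow> real \<Rightarrow> real \<Rightarrow> nat \<Rightarrow> real" where
  "Pi_c_J \<Gamma> t tau p d w j =
     ((1-d)*(\<Gamma> d*tau + w^(j-1)*(\<Gamma> d*(t-tau) - p*t)) + d*\<Gamma> d*tau) / (1 - (1-d)*w^j)"

definition coop_conditions ::
  "(real \<Rightarrow> real) \<Rightarrow> real \<Rightarrow> real \<Rightarrow> real \<Rightarrow> real \<Rightarrow> real \<Rightarrow> real \<Rightarrow> bool" where
  "coop_conditions \<Gamma> t c tau p d w \<longleftrightarrow>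
     (\<forall>j::nat. j \<ge> 2 \<longrightarrow> Pi_s_C t c tau p d w \<ge> Pi_s_J t c tau p d w j) \<and>
     (\<forall>j::nat. j \<ge> 2 \<longrightarrow> Pi_c_C \<Gamma> t tau p d w \<ge> Pi_c_J \<Gamma> t tau p d w j)"

end

theory Submission
  imports Defs
begin

text \<open>
  For \<open>0 < d, w < 1\<close> the gain of \<open>COOP\<close> over \<open>JDEF\<^sub>j\<close> is, for either player, a positive
  multiple of a margin that does not depend on \<open>j\<close>: writing \<open>K w = t - \<tau> + w \<tau>\<close>, the SP
  does not defect iff \<open>c K w \<le> w (1 - d) p t\<close>, and the client does not defect iff
  \<open>p t \<le> \<Gamma>(d) K w\<close>. Chaining the two shows that cooperation requires \<open>w (1 - d) \<Gamma>(d) \<ge> c\<close>,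
  which is the optimality part. Conversely, \<open>(\<tau>\<^sup>\<star>, p\<^sup>\<star>)\<close> is the solution of the two linear
  equations making the client indifferent at the corners \<open>(d\<^sub>m\<^sub>a\<^sub>x, w\<^sup>\<star>)\<close> and \<open>(d\<^sup>\<star>, w\<^sub>m\<^sub>i\<^sub>n)\<close>,
  where \<open>w (1 - d) \<Gamma>(d) = c\<close>; decreasing \<open>d\<close> or increasing \<open>w\<close> from such a corner preserves
  both conditions.
\<close>

lemma Pi_s_C_minus_Pi_s_J:
  assumes "(1-d)*w \<noteq> 1" "(1-d)*w^j \<noteq> 1" "j \<ge> 1"
  shows "Pi_s_C t c tau p d w - Pi_s_J t c tau p d w j =
    (1 - w^(j-1)) * (1-d) * (w*(1-d)*p*t - c*(t - tau + w*tau)) /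
      ((1 - (1-d)*w) * (1 - (1-d)*w^j))"
proof -
  obtain k where j: "j = Suc k" using assms(3) by (cases j) auto
  show ?thesis using assms(1,2) unfolding Pi_s_C_def Pi_s_J_def j
    by (simp add: field_simps)
qed

lemma Pi_c_C_minus_Pi_c_J:
  assumes "(1-d)*w \<noteq> 1" "(1-d)*w^j \<noteq> 1" "j \<ge> 1"
  shows "Pi_c_C \<Gamma> t tau p d w - Pi_c_J \<Gamma> t tau p d w j =
    (1 - w^(j-1)) * (1-d) * (\<Gamma> d*(t - tau + w*tau) - p*t) /
      ((1 - (1-d)*w) * (1 - (1-d)*w^j))"
proof -
  obtain k where j: "j = Suc k" using assms(3) by (cases j) auto
  show ?thesis using assms(1,2) unfolding Pi_c_C_def Pi_c_J_def j
    by (simp add: field_simps)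
qed

lemma damped_power_lt_one:
  fixes d w :: real
  assumes "0 < d" "d < 1" "0 \<le> w" "w \<le> 1"
  shows "(1-d)*w^n < 1"
proof -
  have "(1-d)*w^n \<le> 1-d" using assms by (simp add: mult_left_le power_le_one)
  with assms(1) show ?thesis by simp
qed

lemma zero_le_deviation_gain_iff:
  fixes d w x :: real
  assumes "0 < d" "d < 1" "0 < w" "w < 1" "j \<ge> 2"
  shows "0 \<le> (1 - w^(j-1)) * (1-d) * x / ((1 - (1-d)*w) * (1 - (1-d)*w^j)) \<longleftrightarrow> 0 \<le> x"
proof -
  define q where "q = (1 - w^(j-1)) * (1-d) / ((1 - (1-d)*w) * (1 - (1-d)*w^j))"
  have "0 < (1 - (1-d)*w) * (1 - (1-d)*w^j)"
    using damped_power_lt_one[of d w 1] damped_power_lt_one[of d w j] assms by simp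
  moreover have "w^(j-1) < 1" using assms(3-5) by (simp add: power_less_one_iff)
  ultimately have "0 < q" unfolding q_def using assms(2) by simp
  moreover have "(1 - w^(j-1)) * (1-d) * x / ((1 - (1-d)*w) * (1 - (1-d)*w^j)) = q * x"
    unfolding q_def by simp
  ultimately show ?thesis by (simp add: zero_le_mult_iff)
qed

lemma Pi_s_J_le_Pi_s_C_iff:
  assumes "0 < d" "d < 1" "0 < w" "w < 1" "j \<ge> 2"
  shows "Pi_s_J t c tau p d w j \<le> Pi_s_C t c tau p d w \<longleftrightarrow>
    c*(t - tau + w*tau) \<le> w*(1-d)*p*t"
proof -
  have "(1-d)*w \<noteq> 1" "(1-d)*w^j \<noteq> 1"
    using damped_power_lt_one[of d w 1] damped_power_lt_one[of d w j] assms by auto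
  then have "Pi_s_J t c tau p d w j \<le> Pi_s_C t c tau p d w \<longleftrightarrow>
      0 \<le> (1 - w^(j-1)) * (1-d) * (w*(1-d)*p*t - c*(t - tau + w*tau)) /
        ((1 - (1-d)*w) * (1 - (1-d)*w^j))"
    using assms(5) by (subst Pi_s_C_minus_Pi_s_J[symmetric]) auto
  then show ?thesis unfolding zero_le_deviation_gain_iff[OF assms] by simp
qed

lemma Pi_c_J_le_Pi_c_C_iff:
  assumes "0 < d" "d < 1" "0 < w" "w < 1" "j \<ge> 2"
  shows "Pi_c_J \<Gamma> t tau p d w j \<le> Pi_c_C \<Gamma> t tau p d w \<longleftrightarrow>
    p*t \<le> \<Gamma> d*(t - tau + w*tau)"
proof -
  have "(1-d)*w \<noteq> 1" "(1-d)*w^j \<noteq> 1"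
    using damped_power_lt_one[of d w 1] damped_power_lt_one[of d w j] assms by auto
  then have "Pi_c_J \<Gamma> t tau p d w j \<le> Pi_c_C \<Gamma> t tau p d w \<longleftrightarrow>
      0 \<le> (1 - w^(j-1)) * (1-d) * (\<Gamma> d*(t - tau + w*tau) - p*t) /
        ((1 - (1-d)*w) * (1 - (1-d)*w^j))"
    using assms(5) by (subst Pi_c_C_minus_Pi_c_J[symmetric]) auto
  then show ?thesis unfolding zero_le_deviation_gain_iff[OF assms] by simp
qed

lemma coop_conditions_iff:
  assumes "0 < d" "d < 1" "0 < w" "w < 1"
  shows "coop_conditions \<Gamma> t c tau p d w \<longleftrightarrow>
    c*(t - tau + w*tau) \<le> w*(1-d)*p*t \<and> p*t \<le> \<Gamma> d*(t - tau + w*tau)"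
proof -
  have "coop_conditions \<Gamma> t c tau p d w \<longleftrightarrow>
    (\<forall>j::nat. j \<ge> 2 \<longrightarrow> c*(t - tau + w*tau) \<le> w*(1-d)*p*t) \<and>
    (\<forall>j::nat. j \<ge> 2 \<longrightarrow> p*t \<le> \<Gamma> d*(t - tau + w*tau))"
    unfolding coop_conditions_def
    using Pi_s_J_le_Pi_s_C_iff[OF assms] Pi_c_J_le_Pi_c_C_iff[OF assms] by simp
  also have "\<dots> \<longleftrightarrow> c*(t - tau + w*tau) \<le> w*(1-d)*p*t \<and> p*t \<le> \<Gamma> d*(t - tau + w*tau)"
    by auto
  finally show ?thesis .
qed

lemma coop_conditions_beyond_break_even:
  assumes c: "0 < c" and tau: "0 \<le> tau" "tau \<le> t"
    and corner: "0 < w0" "d0 < 1"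
    and break_even: "w0*(1-d0)*\<Gamma> d0 = c"
    and indifferent: "p*t = \<Gamma> d0*(t - tau + w0*tau)"
    and d: "0 < d" "d \<le> d0" "\<Gamma> d0 \<le> \<Gamma> d"
    and w: "w0 \<le> w" "w < 1"
  shows "coop_conditions \<Gamma> t c tau p d w"
proof -
  have "0 < \<Gamma> d0"
    using zero_less_mult_pos[of "w0*(1-d0)" "\<Gamma> d0"] c corner break_even by simp
  have K0: "0 \<le> t - tau + w0*tau" using tau corner mult_nonneg_nonneg[of w0 tau] by linarith
  then have "0 \<le> p*t" unfolding indifferent using \<open>0 < \<Gamma> d0\<close> by simp
  have "w*(t - tau + w0*tau) - w0*(t - tau + w*tau) = (w - w0)*(t - tau)"
    by (simp add: algebra_simps)
  then have "w0*(t - tau + w*tau) \<le> w*(t - tau + w0*tau)"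
    using w tau mult_nonneg_nonneg[of "w - w0" "t - tau"] by linarith
  then have "c*(t - tau + w*tau) \<le> (1-d0)*\<Gamma> d0*(w*(t - tau + w0*tau))"
    unfolding break_even[symmetric] using corner \<open>0 < \<Gamma> d0\<close>
    by (simp add: mult.assoc mult.left_commute mult_left_mono)
  also have "\<dots> = w*(1-d0)*(p*t)" unfolding indifferent by (simp add: algebra_simps)
  also have "\<dots> \<le> w*(1-d)*(p*t)"
    using d corner w \<open>0 \<le> p*t\<close> by (simp add: mult.assoc mult_left_mono mult_right_mono)
  finally have sp: "c*(t - tau + w*tau) \<le> w*(1-d)*(p*t)" .
  have "p*t \<le> \<Gamma> d*(t - tau + w*tau)"
    unfolding indifferent using d w tau K0 \<open>0 < \<Gamma> d0\<close>
    by (intro mult_mono) (auto intro: mult_right_mono)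
  with sp show ?thesis using d corner w by (subst coop_conditions_iff) (auto simp: mult.assoc)
qed

lemma not_coop_conditions_below_break_even:
  assumes "0 < d" "d < 1" "0 < w" "w < 1" "0 \<le> tau" "tau < t"
    and unprofitable: "w*(1-d)*\<Gamma> d < c"
  shows "\<not> coop_conditions \<Gamma> t c tau p d w"
proof
  assume "coop_conditions \<Gamma> t c tau p d w"
  then have sp: "c*(t - tau + w*tau) \<le> w*(1-d)*(p*t)"
    and client: "p*t \<le> \<Gamma> d*(t - tau + w*tau)"
    using coop_conditions_iff[OF assms(1-4)] by (auto simp: mult.assoc)
  have K: "0 < t - tau + w*tau" using assms(3,5,6) mult_nonneg_nonneg[of w tau] by linarith
  have "w*(1-d)*(p*t) \<le> w*(1-d)*\<Gamma> d*(t - tau + w*tau)"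
    using client assms(2,3) by (simp add: mult.assoc mult_left_mono)
  also have "\<dots> < c*(t - tau + w*tau)" using unprofitable K by simp
  finally show False using sp by simp
qed

lemma indifference_equations_solution:
  fixes g1 g2 d1 d2 w1 w2 c p t tau :: real
  assumes w1: "w1*(1-d1)*g1 = c" and w2: "w2*(1-d2)*g2 = c" "w2 \<noteq> 0" and "d1 \<noteq> 1" "d2 \<noteq> 1"
    and den_p: "(g2 - g1)*(1-d2)*(1-d1) - c*(d2-d1) \<noteq> 0"
    and den_tau: "g1 - c/(1-d1) \<noteq> 0"
    and p: "p = c*(c/w2 - g1*(1-d1)) / ((g2 - g1)*(1-d2)*(1-d1) - c*(d2-d1))"
    and tau: "tau = (g1 - p)/(g1 - c/(1-d1)) * t"
  shows "p*t = g1*(t - tau + w1*tau)" "p*t = g2*(t - tau + w2*tau)"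
proof -
  have den_tau': "g1*(1-d1) - c \<noteq> 0" using den_tau \<open>d1 \<noteq> 1\<close> by (simp add: field_simps)
  have tau': "tau*(g1*(1-d1) - c) = (g1 - p)*(1-d1)*t"
    using den_tau \<open>d1 \<noteq> 1\<close> unfolding tau by (simp add: field_simps)
  have "(1-d1)*(g1*(t - tau + w1*tau)) = g1*(1-d1)*t - tau*(g1*(1-d1) - c)"
    unfolding w1[symmetric] by (simp add: algebra_simps)
  also have "\<dots> = (1-d1)*(p*t)"
    unfolding tau' by (simp add: algebra_simps)
  finally show "p*t = g1*(t - tau + w1*tau)" using \<open>d1 \<noteq> 1\<close> by simp
  have "c/w2 = g2*(1-d2)" using w2 by (auto simp: field_simps)
  then have p': "p*((g2 - g1)*(1-d2)*(1-d1) - c*(d2-d1)) = c*(g2*(1-d2) - g1*(1-d1))"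
    using den_p unfolding p by simp
  have "(g1*(1-d1) - c)*(1-d2)*(g2*(t - tau + w2*tau)) = (g1*(1-d1) - c)*(1-d2)*(p*t)"
    using p' tau' w2 by algebra
  then show "p*t = g2*(t - tau + w2*tau)" using den_tau' \<open>d2 \<noteq> 1\<close> by simp
qed

theorem theorem2:
  fixes \<Gamma> :: "real \<Rightarrow> real" and t c dmax wmin dstar :: real
  assumes t_pos: "t > 0" and c_pos: "c > 0"
    and G_cont: "continuous_on {0..1} \<Gamma>"
    and G_dec: "\<forall>x\<in>{0..1}. \<forall>y\<in>{0..1}. x < y \<longrightarrow> \<Gamma> y < \<Gamma> x"
    and G_pos: "\<forall>x\<in>{0..1}. \<Gamma> x > 0"
    and dmax: "0 < dmax" "dmax < 1"
    and wmin: "0 < wmin" "wmin < 1"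
    and wmin_G0: "wmin * \<Gamma> 0 > c"
    and dstar: "0 < dstar" "dstar < 1" "(1 - dstar) * \<Gamma> dstar = c / wmin"
    and dstar_unique: "\<forall>x. 0 < x \<and> x < 1 \<and> (1 - x) * \<Gamma> x = c / wmin \<longrightarrow> x = dstar"
    and den_p: "(\<Gamma> dstar - \<Gamma> dmax) * (1 - dstar) * (1 - dmax) - c * (dstar - dmax) \<noteq> 0"
    and den_tau: "\<Gamma> dmax - c / (1 - dmax) \<noteq> 0"
    and tau_range:
      "let pstar = c * (c / wmin - \<Gamma> dmax * (1 - dmax)) /
                   ((\<Gamma> dstar - \<Gamma> dmax) * (1 - dstar) * (1 - dmax) - c * (dstar - dmax));
           taustar = (\<Gamma> dmax - pstar) / (\<Gamma> dmax - c / (1 - dmax)) * t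
       in 0 < taustar \<and> taustar < t"
  shows
    "let pstar = c * (c / wmin - \<Gamma> dmax * (1 - dmax)) /
                 ((\<Gamma> dstar - \<Gamma> dmax) * (1 - dstar) * (1 - dmax) - c * (dstar - dmax));
         taustar = (\<Gamma> dmax - pstar) / (\<Gamma> dmax - c / (1 - dmax)) * t;
         wstar = c / ((1 - dmax) * \<Gamma> dmax)
     in (\<forall>d w. 0 < d \<and> d \<le> dmax \<and> wstar \<le> w \<and> w < 1 \<longrightarrow>
            coop_conditions \<Gamma> t c taustar pstar d w)
      \<and> (\<forall>d w. wmin \<le> w \<and> w < 1 \<and> 0 < d \<and> d \<le> dstar \<longrightarrow>
            coop_conditions \<Gamma> t c taustar pstar d w)
      \<and> (\<forall>tau p w. 0 < tau \<and> tau < t \<and> 0 < p \<and> 0 < w \<and> w < 1 \<and> w < wstar \<longrightarrow>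
            \<not> coop_conditions \<Gamma> t c tau p dmax w)
      \<and> (\<forall>tau p d. 0 < tau \<and> tau < t \<and> 0 < p \<and> dstar < d \<and> d < 1 \<longrightarrow>
            \<not> coop_conditions \<Gamma> t c tau p d wmin)"
proof -
  define pstar where "pstar = c * (c / wmin - \<Gamma> dmax * (1 - dmax)) /
    ((\<Gamma> dstar - \<Gamma> dmax) * (1 - dstar) * (1 - dmax) - c * (dstar - dmax))"
  define taustar where "taustar = (\<Gamma> dmax - pstar) / (\<Gamma> dmax - c / (1 - dmax)) * t"
  define wstar where "wstar = c / ((1 - dmax) * \<Gamma> dmax)"
  have taustar: "0 < taustar" "taustar < t"
    using tau_range unfolding Let_def pstar_def[symmetric] taustar_def[symmetric] by simp_all
  have \<Gamma>_antimono: "\<Gamma> y \<le> \<Gamma> x" if "0 \<le> x" "x \<le> y" "y \<le> 1" for x y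
    using G_dec that by (cases "x = y") (auto simp: less_eq_real_def)
  have "0 < \<Gamma> dmax" using G_pos dmax by auto
  then have "0 < wstar" unfolding wstar_def using c_pos dmax by simp
  have break_even_max: "wstar*(1-dmax)*\<Gamma> dmax = c"
    unfolding wstar_def using \<open>0 < \<Gamma> dmax\<close> dmax by (simp add: field_simps)
  have break_even_star: "wmin*(1-dstar)*\<Gamma> dstar = c"
    using dstar(3) wmin by (simp add: field_simps)
  have indifferent:
    "pstar*t = \<Gamma> dmax*(t - taustar + wstar*taustar)"
    "pstar*t = \<Gamma> dstar*(t - taustar + wmin*taustar)"
    using indifference_equations_solution[OF break_even_max break_even_star _ _ _ den_p den_tau
        pstar_def taustar_def] wmin dmax dstar
    by auto
  show ?thesis unfolding Let_def pstar_def[symmetric] taustar_def[symmetric] wstar_def[symmetric]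
  proof (intro conjI allI impI)
    fix d w assume "0 < d \<and> d \<le> dmax \<and> wstar \<le> w \<and> w < 1"
    then show "coop_conditions \<Gamma> t c taustar pstar d w"
      using c_pos taustar \<open>0 < wstar\<close> dmax break_even_max indifferent(1) \<Gamma>_antimono[of d dmax]
      by (intro coop_conditions_beyond_break_even[of c taustar t wstar dmax]) auto
  next
    fix d w assume "wmin \<le> w \<and> w < 1 \<and> 0 < d \<and> d \<le> dstar"
    then show "coop_conditions \<Gamma> t c taustar pstar d w"
      using c_pos taustar wmin dstar break_even_star indifferent(2) \<Gamma>_antimono[of d dstar]
      by (intro coop_conditions_beyond_break_even[of c taustar t wmin dstar]) auto
  next
    fix tau p w :: real assume range: "0 < tau \<and> tau < t \<and> 0 < p \<and> 0 < w \<and> w < 1 \<and> w < wstar"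
    then have "w*(1-dmax)*\<Gamma> dmax < c"
      unfolding break_even_max[symmetric] using dmax \<open>0 < \<Gamma> dmax\<close> by simp
    with range show "\<not> coop_conditions \<Gamma> t c tau p dmax w"
      using not_coop_conditions_below_break_even dmax by auto
  next
    fix tau p d :: real assume range: "0 < tau \<and> tau < t \<and> 0 < p \<and> dstar < d \<and> d < 1"
    then have "(1-d)*\<Gamma> d < (1-dstar)*\<Gamma> dstar"
      using G_dec G_pos[rule_format, of d] dstar by (intro mult_strict_mono) auto
    then have "wmin*(1-d)*\<Gamma> d < c"
      unfolding break_even_star[symmetric] using wmin by (simp add: mult.assoc)
    with range show "\<not> coop_conditions \<Gamma> t c tau p d wmin"
      using not_coop_conditions_below_break_even dstar wmin by auto
  qed
qed

end
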